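(* Let $n\ge d$, $\mathbf X\in\mathbb R^{n\times d}$ with full column rank, $1\le k<d$, $\lambda>0$, and $\mathbf y\in\mathbb R^n$ with $\hat\sigma_{1:k}=\|(\mathbf I-\mathbf P_{-1:k})\mathbf y\|>0$; let $\hat{\mathbf y}_{1:k}=\mathbf P_{-1:k}\mathbf y$, $\mathbf u=\mathbf V^T(\mathbf y-\hat{\mathbf y}_{1:k})/\hat\sigma_{1:k}$, and let $\hat{\boldsymbol\beta}^\lambda=\arg\min_{\boldsymbol\beta\in\mathbb R^d}\big(\frac1{2n}\|\mathbf y-\mathbf X\boldsymbol\beta\|_2^2+\lambda(\|\boldsymbol\beta_{1:k}\|_2+\|\boldsymbol\beta_{-1:k}\|_1)\big)$. For $\mathbf b\in\mathbb R^k$ and $\boldsymbol\epsilon$ in the closed unit ball of $\mathbb R^k$ define $$\hat{\boldsymbol\beta}^\lambda_{-1:k}(\mathbf b)=\arg\min_{\boldsymbol\gamma\in\mathbb R^{d-k}}\Big(\tfrac1{2n}\|\mathbf y-\mathbf X_{1:k}\mathbf b-\mathbf X_{-1:k}\boldsymbol\gamma\|_2^2+\lambda\|\boldsymbol\gamma\|_1\Big),$$ $$\Lambda_{1:k}(\mathbf b,\boldsymbol\epsilon)=\frac1{\hat\sigma_{1:k}}(\mathbf X_{1:k}^T\mathbf V_{1:k})^{-1}\Big(-\mathbf X_{1:k}^T\big(\hat{\mathbf y}_{1:k}-\mathbf X_{1:k}\mathbf b-\mathbf X_{-1:k}\hat{\boldsymbol\beta}^\lambda_{-1:k}(\mathbf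 b)\big)+n\lambda\boldsymbol\epsilon\Big),$$ and let $f^{-1}(\mathbf b)=\{\Lambda_{1:k}(\mathbf b,\mathbf b/\|\mathbf b\|)\}$ if $\mathbf b\ne\mathbf 0$ and $f^{-1}(\mathbf 0)=\{\Lambda_{1:k}(\mathbf 0,\boldsymbol\epsilon):\|\boldsymbol\epsilon\|\le1\}$. Then the function $f:\mathbb R^k\to\mathbb R^k$ with this inverse satisfies $\hat{\boldsymbol\beta}^\lambda_{1:k}=f(\mathbf u_{1:k})$; i.e., for every $\mathbf b\in\mathbb R^k$, $\hat{\boldsymbol\beta}^\lambda_{1:k}=\mathbf b$ if and only if $\mathbf u_{1:k}\in f^{-1}(\mathbf b)$.
   Context: $\mathbf A_i$, $\mathbf A_{1:i}$, $\mathbf A_{-1:i}$ denote the $i$-th column, first $i$ columns, and submatrix with first $i$ columns removed (similarly for vector entries). $\mathbf P_{-1:i}$ is the orthogonal projection onto the column space of $\mathbf X_{-1:i}$. $\mathbf V\in\mathbb R^{n\times(n-d+k)}$ has orthonormal columns spanning the orthogonal complement of the column space of $\mathbf X_{-1:k}$, with first $k$ columns $\mathbf V_i=(\mathbf I-\mathbf P_{-1:i})\mathbf X_i/\|(\mathbf I-\mathbf P_{-1:i})\mathbf X_i\|$. Both minimizers above are unique since $\mathbf X$ and $\mathbf X_{-1:k}$ have full column rank. *)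

theory Defs
  imports "HOL-Analysis.Analysis"
begin

text \<open>Column index set of X is the sum type 'k + 'm: Inl i are the first k columns
  (ordered by the well-order of 'k), Inr j are the remaining d - k columns.\<close>

definition blk1 :: "real^('k::finite + 'm::finite)^'n \<Rightarrow> real^'k^'n" where
  "blk1 X = (\<chi> r i. X $ r $ Inl i)"

definition blk2 :: "real^('k::finite + 'm::finite)^'n \<Rightarrow> real^'m^'n" where
  "blk2 X = (\<chi> r j. X $ r $ Inr j)"

definition vfst :: "real^('k::finite + 'm::finite) \<Rightarrow> real^'k" where
  "vfst \<beta> = (\<chi> i. \<beta> $ Inl i)"

definition vsnd :: "real^('k::finite + 'm::finite) \<Rightarrow> real^'m" where
  "vsnd \<beta> = (\<chi> j. \<beta> $ Inr j)"

definition l1norm :: "real^'m::finite \<Rightarrow> real" where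
  "l1norm \<gamma> = (\<Sum>j\<in>UNIV. \<bar>\<gamma> $ j\<bar>)"

definition oproj :: "(real^'n::finite) set \<Rightarrow> real^'n \<Rightarrow> real^'n" where
  "oproj S y = closest_point (span S) y"

definition Pk :: "real^('k::finite + 'm::finite)^'n::finite \<Rightarrow> real^'n \<Rightarrow> real^'n" where
  "Pk X = oproj {column (Inr j) X | j. True}"

text \<open>P_{-1:i} for i in the first block: projection onto the span of the columns of X
  with the first i columns (those Inl j with j \<le> i) removed.\<close>
definition Pminus :: "real^('k::{finite,wellorder} + 'm::finite)^'n::finite \<Rightarrow> 'k::{finite,wellorder} \<Rightarrow> real^'n \<Rightarrow> real^'n" where
  "Pminus X i = oproj ({column (Inr j) X | j. True} \<union> {column (Inl j) X | j. i < j})"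

definition Vcol :: "real^('k::{finite,wellorder} + 'm::finite)^'n::finite \<Rightarrow> 'k::{finite,wellorder} \<Rightarrow> real^'n" where
  "Vcol X i = (let w = column (Inl i) X - Pminus X i (column (Inl i) X) in (1 / norm w) *\<^sub>R w)"

definition V1 :: "real^('k::{finite,wellorder} + 'm::finite)^'n::finite \<Rightarrow> real^'k::{finite,wellorder}^'n" where
  "V1 X = (\<chi> r i. Vcol X i $ r)"

definition lasso_obj :: "real^('k::finite + 'm::finite)^'n::finite \<Rightarrow> real^'n \<Rightarrow> real \<Rightarrow> real^('k + 'm) \<Rightarrow> real" where
  "lasso_obj X y lam \<beta> = 1 / (2 * real CARD('n)) * (norm (y - X *v \<beta>))\<^sup>2
      + lam * (norm (vfst \<beta>) + l1norm (vsnd \<beta>))"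

definition sub_obj :: "real^('k::finite + 'm::finite)^'n::finite \<Rightarrow> real^'n \<Rightarrow> real \<Rightarrow> real^'k \<Rightarrow> real^'m \<Rightarrow> real" where
  "sub_obj X y lam b \<gamma> = 1 / (2 * real CARD('n)) * (norm (y - blk1 X *v b - blk2 X *v \<gamma>))\<^sup>2
      + lam * l1norm \<gamma>"

definition sigk :: "real^('k::finite + 'm::finite)^'n::finite \<Rightarrow> real^'n \<Rightarrow> real" where
  "sigk X y = norm (y - Pk X y)"

text \<open>Lambda_{1:k}(b, eps), with g b = hat beta_{-1:k}(b).\<close>
definition Lam :: "real^('k::{finite,wellorder} + 'm::finite)^'n::finite \<Rightarrow> real^'n \<Rightarrow> real
    \<Rightarrow> (real^'k::{finite,wellorder} \<Rightarrow> real^'m) \<Rightarrow> real^'k::{finite,wellorder} \<Rightarrow> real^'k::{finite,wellorder} \<Rightarrow> real^'k::{finite,wellorder}" where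
  "Lam X y lam g b \<epsilon> = (1 / sigk X y) *\<^sub>R
     (matrix_inv (transpose (blk1 X) ** V1 X) *v
       (- (transpose (blk1 X) *v (Pk X y - blk1 X *v b - blk2 X *v g b))
        + (real CARD('n) * lam) *\<^sub>R \<epsilon>))"

definition finv :: "real^('k::{finite,wellorder} + 'm::finite)^'n::finite \<Rightarrow> real^'n \<Rightarrow> real
    \<Rightarrow> (real^'k::{finite,wellorder} \<Rightarrow> real^'m) \<Rightarrow> real^'k::{finite,wellorder} \<Rightarrow> (real^'k::{finite,wellorder}) set" where
  "finv X y lam g b = (if b \<noteq> 0 then {Lam X y lam g b ((1 / norm b) *\<^sub>R b)}
                        else {Lam X y lam g 0 \<epsilon> | \<epsilon>. norm \<epsilon> \<le> 1})"

definition u1 :: "real^('k::{finite,wellorder} + 'm::finite)^'n::finite \<Rightarrow> real^'n \<Rightarrow> real^'k::{finite,wellorder}" where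
  "u1 X y = (1 / sigk X y) *\<^sub>R (transpose (V1 X) *v (y - Pk X y))"

end

theory Submission
  imports Defs
begin

text \<open>
  Write the lasso objective as F(b, \<gamma>) = (1/2n) |y - X1 b - X2 \<gamma>|^2 + \<lambda> |b| + \<lambda> |\<gamma>|_1,
  where X1, X2 are the first k and the remaining columns of X; it is strictly convex because X has
  full column rank. For a smooth coupling plus a separable convex penalty a coordinatewise minimum
  is a global one. Since g b minimises F(b, -), the first block of the unique minimiser is b iff b
  minimises the group lasso problem F(-, g b), i.e. iff X1' (y - X1 b - X2 g b) = n \<lambda> \<epsilon> for a
  subgradient \<epsilon> of the Euclidean norm at b. The columns of V1 come from Gram-Schmidt, so
  M = X1' V1 is triangular with nonzero diagonal and M V1' w = X1' w whenever w is orthogonal to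
  the columns of X2. Applied to w = y - P y this turns the subgradient equation into u = \<Lambda>(b, \<epsilon>).
\<close>

lemma le_of_le_plus_multiples:
  fixes a b C :: real
  assumes "\<And>t. 0 < t \<Longrightarrow> t \<le> 1 \<Longrightarrow> a \<le> b + t * C"
  shows "a \<le> b"
proof -
  have "((\<lambda>t. b + t * C) \<longlongrightarrow> b) (at_right 0)"
    by (auto intro!: tendsto_eq_intros)
  moreover have "eventually (\<lambda>t. a \<le> b + t * C) (at_right 0)"
    unfolding eventually_at_right_field using assms by (intro exI[of _ 1]) auto
  ultimately show ?thesis
    by (rule tendsto_lowerbound) simp
qed

lemma power2_norm_diff:
  fixes u v :: "'a::real_inner"
  shows "(norm (u - v))\<^sup>2 = (norm u)\<^sup>2 - 2 * inner u v + (norm v)\<^sup>2"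
  by (simp add: power2_norm_eq_inner inner_diff_left inner_diff_right inner_commute)

lemma power2_norm_convex_combination:
  fixes u v :: "'a::real_inner"
  shows "(norm ((1 - t) *\<^sub>R u + t *\<^sub>R v))\<^sup>2
    = (1 - t) * (norm u)\<^sup>2 + t * (norm v)\<^sup>2 - t * (1 - t) * (norm (u - v))\<^sup>2"
  by (simp add: power2_norm_eq_inner inner_add_left inner_add_right inner_diff_left
      inner_diff_right inner_commute algebra_simps)

lemma power2_norm_mixed_difference:
  fixes r a b :: "'a::real_inner"
  shows "(norm (r - a - b))\<^sup>2 + (norm r)\<^sup>2 = (norm (r - a))\<^sup>2 + (norm (r - b))\<^sup>2 + 2 * inner a b"
  by (simp add: power2_norm_eq_inner inner_diff_left inner_diff_right inner_commute algebra_simps)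

lemma convex_on_norm: "convex_on UNIV norm"
  using convex_on_dist[of UNIV 0] by simp

lemma convex_on_l1norm: "convex_on UNIV l1norm"
proof (rule convex_onI)
  fix t :: real and a b :: "real^'m::finite"
  assume t: "0 < t" "t < 1"
  have "\<bar>(1 - t) * a $ j + t * b $ j\<bar> \<le> (1 - t) * \<bar>a $ j\<bar> + t * \<bar>b $ j\<bar>" for j
    using t abs_triangle_ineq[of "(1 - t) * a $ j" "t * b $ j"] by (simp add: abs_mult)
  then show "l1norm ((1 - t) *\<^sub>R a + t *\<^sub>R b) \<le> (1 - t) * l1norm a + t * l1norm b"
    by (simp add: l1norm_def sum_distrib_left sum.distrib[symmetric] sum_mono)
qed simp

definition norm_subdifferential :: "'a::real_inner \<Rightarrow> 'a set" where
  "norm_subdifferential b = {\<epsilon>. norm \<epsilon> \<le> 1 \<and> inner \<epsilon> b = norm b}"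

lemma norm_subdifferential_0 [simp]: "norm_subdifferential 0 = cball 0 1"
  by (auto simp: norm_subdifferential_def)

lemma norm_subdifferential_nonzero:
  assumes "b \<noteq> 0"
  shows "norm_subdifferential b = {sgn b}"
proof (intro equalityI subsetI)
  fix \<epsilon> assume "\<epsilon> \<in> norm_subdifferential b"
  then have "norm \<epsilon> \<le> 1" and "inner \<epsilon> (sgn b) = 1"
    using assms by (auto simp: norm_subdifferential_def sgn_div_norm)
  then have "(norm (\<epsilon> - sgn b))\<^sup>2 \<le> 0"
    using assms by (simp add: power2_norm_diff norm_sgn power_le_one)
  then show "\<epsilon> \<in> {sgn b}" by simp
next
  fix \<epsilon> assume "\<epsilon> \<in> {sgn b}"
  then show "\<epsilon> \<in> norm_subdifferential b"
    using assms
    by (simp add: norm_subdifferential_def norm_sgn sgn_div_norm dot_square_norm power2_eq_square)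
qed

lemma norm_subgradient_inequality:
  assumes "\<epsilon> \<in> norm_subdifferential b"
  shows "norm b + inner \<epsilon> (b' - b) \<le> norm b'"
proof -
  have "inner \<epsilon> b' \<le> norm \<epsilon> * norm b'" by (rule norm_cauchy_schwarz)
  also have "\<dots> \<le> norm b'"
    using assms by (intro mult_left_le_one_le) (auto simp: norm_subdifferential_def)
  finally have "inner \<epsilon> b' \<le> norm b'" .
  with assms show ?thesis by (simp add: norm_subdifferential_def inner_diff_right)
qed

lemma inner_transpose_mult:
  fixes A :: "real^'k::finite^'n::finite"
  shows "inner (transpose A *v r) h = inner r (A *v h)"
  using dot_lmul_matrix[of r A h] by simp

lemma power2_norm_residual_step:
  fixes A :: "real^'k::finite^'n::finite"
  shows "(norm (r - A *v (b + t *\<^sub>R h)))\<^sup>2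
    = (norm (r - A *v b))\<^sup>2 - 2 * t * inner (transpose A *v (r - A *v b)) h + t\<^sup>2 * (norm (A *v h))\<^sup>2"
proof -
  have residual: "r - A *v (b + t *\<^sub>R h) = (r - A *v b) - t *\<^sub>R (A *v h)"
    by (simp add: matrix_vector_right_distrib matrix_vector_mult_scaleR)
  show ?thesis
    unfolding residual inner_transpose_mult power2_norm_diff by (simp add: power_mult_distrib)
qed

definition group_lasso_obj :: "real \<Rightarrow> real^'k::finite^'n::finite \<Rightarrow> real^'n \<Rightarrow> real \<Rightarrow> real^'k \<Rightarrow> real" where
  "group_lasso_obj N A r lam b = (norm (r - A *v b))\<^sup>2 / (2 * N) + lam * norm b"

lemma group_lasso_obj_step:
  assumes "N > 0"
  shows "group_lasso_obj N A r lam (b + t *\<^sub>R h) - group_lasso_obj N A r lam b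
    = (t\<^sup>2 * (norm (A *v h))\<^sup>2 / 2 - t * inner (transpose A *v (r - A *v b)) h) / N
      + lam * (norm (b + t *\<^sub>R h) - norm b)"
  using assms by (simp add: group_lasso_obj_def power2_norm_residual_step field_simps)

lemma group_lasso_first_order:
  assumes min: "\<forall>b'. group_lasso_obj N A r lam b \<le> group_lasso_obj N A r lam b'"
    and "N > 0" "t > 0"
  shows "inner (transpose A *v (r - A *v b)) h
    \<le> N * lam * (norm (b + t *\<^sub>R h) - norm b) / t + t * ((norm (A *v h))\<^sup>2 / 2)"
proof -
  have "0 \<le> (t\<^sup>2 * (norm (A *v h))\<^sup>2 / 2 - t * inner (transpose A *v (r - A *v b)) h) / N
      + lam * (norm (b + t *\<^sub>R h) - norm b)"
    using min group_lasso_obj_step[OF \<open>N > 0\<close>, of A r lam b t h] by (metis diff_ge_0_iff_ge)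
  then show ?thesis
    using \<open>N > 0\<close> \<open>t > 0\<close> by (simp add: field_simps power2_eq_square)
qed

lemma group_lasso_subgradient_if_minimizer:
  assumes min: "\<forall>b'. group_lasso_obj N A r lam b \<le> group_lasso_obj N A r lam b'"
    and N: "N > 0" and lam: "lam > 0"
  shows "\<exists>\<epsilon> \<in> norm_subdifferential b. transpose A *v (r - A *v b) = (N * lam) *\<^sub>R \<epsilon>"
proof -
  define q where "q = transpose A *v (r - A *v b)"
  note first_order = group_lasso_first_order[OF min N, folded q_def]
  have "inner q h \<le> N * lam * norm h" for h
  proof (rule le_of_le_plus_multiples)
    fix t :: real assume "0 < t" "t \<le> 1"
    have "N * lam * (norm (b + t *\<^sub>R h) - norm b) \<le> N * lam * (t * norm h)"
      using norm_triangle_ineq[of b "t *\<^sub>R h"] \<open>0 < t\<close> N lam by (intro mult_left_mono) auto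
    then have "N * lam * (norm (b + t *\<^sub>R h) - norm b) / t \<le> N * lam * norm h"
      using \<open>0 < t\<close> by (simp add: divide_le_eq mult.commute mult.left_commute)
    then show "inner q h \<le> N * lam * norm h + t * ((norm (A *v h))\<^sup>2 / 2)"
      using first_order[OF \<open>0 < t\<close>, of h] by linarith
  qed
  from this[of q] have norm_q: "norm q \<le> N * lam"
    using N lam by (cases "q = 0") (auto simp: dot_square_norm power2_eq_square)
  have "N * lam * norm b \<le> inner q b"
  proof (rule le_of_le_plus_multiples)
    fix t :: real assume "0 < t" "t \<le> 1"
    have "norm (b + t *\<^sub>R - b) = norm ((1 - t) *\<^sub>R b)"
      by (simp add: algebra_simps)
    also have "\<dots> = (1 - t) * norm b"
      using \<open>t \<le> 1\<close> by simp
    finally have "norm (b + t *\<^sub>R - b) - norm b = - t * norm b"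
      by (simp add: algebra_simps)
    moreover have "A *v - b = - (A *v b)"
      by (simp add: vec_eq_iff matrix_vector_mult_def sum_negf)
    ultimately show "N * lam * norm b \<le> inner q b + t * ((norm (A *v b))\<^sup>2 / 2)"
      using first_order[OF \<open>0 < t\<close>, of "- b"] \<open>0 < t\<close> by simp
  qed
  moreover have "inner q b \<le> N * lam * norm b"
    using norm_cauchy_schwarz[of q b] mult_right_mono[OF norm_q norm_ge_zero[of b]] by linarith
  ultimately have "(1 / (N * lam)) *\<^sub>R q \<in> norm_subdifferential b"
    using N lam norm_q by (simp add: norm_subdifferential_def field_simps)
  moreover have "q = (N * lam) *\<^sub>R ((1 / (N * lam)) *\<^sub>R q)"
    using N lam by simp
  ultimately show ?thesis
    unfolding q_def[symmetric] by blast
qed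

lemma group_lasso_minimizer_if_subgradient:
  assumes "\<epsilon> \<in> norm_subdifferential b" "transpose A *v (r - A *v b) = (N * lam) *\<^sub>R \<epsilon>"
    and N: "N > 0" and lam: "lam \<ge> 0"
  shows "group_lasso_obj N A r lam b \<le> group_lasso_obj N A r lam b'"
proof -
  have "0 \<le> lam * (norm b' - norm b - inner \<epsilon> (b' - b))"
    using norm_subgradient_inequality[OF assms(1), of b'] lam by simp
  also have "\<dots> \<le> ((norm (A *v (b' - b)))\<^sup>2 / 2 - inner (transpose A *v (r - A *v b)) (b' - b)) / N
      + lam * (norm b' - norm b)"
    unfolding assms(2) using N lam by (simp add: field_simps)
  also have "\<dots> = group_lasso_obj N A r lam b' - group_lasso_obj N A r lam b"
    using group_lasso_obj_step[OF N, of A r lam b 1 "b' - b"] by simp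
  finally show ?thesis by simp
qed

lemma group_lasso_minimizer_iff:
  assumes "N > 0" "lam > 0"
  shows "(\<forall>b'. group_lasso_obj N A r lam b \<le> group_lasso_obj N A r lam b')
    \<longleftrightarrow> (\<exists>\<epsilon> \<in> norm_subdifferential b. transpose A *v (r - A *v b) = (N * lam) *\<^sub>R \<epsilon>)"
  using group_lasso_subgradient_if_minimizer[OF _ assms]
    group_lasso_minimizer_if_subgradient[OF _ _ assms(1)] assms(2)
  by (meson less_imp_le)

locale two_block_least_squares =
  fixes A :: "'a::real_vector \<Rightarrow> 'c::real_inner" and B :: "'b::real_vector \<Rightarrow> 'c"
    and y :: 'c and c :: real and P :: "'a \<Rightarrow> real" and Q :: "'b \<Rightarrow> real"
  assumes linear_A: "linear A" and linear_B: "linear B" and c_nonneg: "0 \<le> c"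
    and convex_P: "convex_on UNIV P" and convex_Q: "convex_on UNIV Q"
begin

definition obj :: "'a \<Rightarrow> 'b \<Rightarrow> real" where
  "obj b \<gamma> = c * (norm (y - A b - B \<gamma>))\<^sup>2 + P b + Q \<gamma>"

lemma obj_convex_combination:
  assumes "0 \<le> t" "t \<le> 1"
  shows "obj ((1 - t) *\<^sub>R b + t *\<^sub>R b') ((1 - t) *\<^sub>R \<gamma> + t *\<^sub>R \<gamma>')
    \<le> (1 - t) * obj b \<gamma> + t * obj b' \<gamma>' - c * (t * (1 - t)) * (norm (A (b - b') + B (\<gamma> - \<gamma>')))\<^sup>2"
proof -
  let ?r = "y - A b - B \<gamma>" and ?r' = "y - A b' - B \<gamma>'"
  have "A ((1 - t) *\<^sub>R b + t *\<^sub>R b') = (1 - t) *\<^sub>R A b + t *\<^sub>R A b'"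
    "B ((1 - t) *\<^sub>R \<gamma> + t *\<^sub>R \<gamma>') = (1 - t) *\<^sub>R B \<gamma> + t *\<^sub>R B \<gamma>'"
    using linear_A linear_B by (simp_all add: linear_add linear_scale)
  then have residual: "y - A ((1 - t) *\<^sub>R b + t *\<^sub>R b') - B ((1 - t) *\<^sub>R \<gamma> + t *\<^sub>R \<gamma>')
      = (1 - t) *\<^sub>R ?r + t *\<^sub>R ?r'"
    by (simp add: algebra_simps)
  have "?r - ?r' = - (A (b - b') + B (\<gamma> - \<gamma>'))"
    using linear_A linear_B by (simp add: linear_diff algebra_simps)
  then have difference: "norm (?r - ?r') = norm (A (b - b') + B (\<gamma> - \<gamma>'))"
    by (simp only: norm_minus_cancel)
  have "c * (norm ((1 - t) *\<^sub>R ?r + t *\<^sub>R ?r'))\<^sup>2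
      = (1 - t) * (c * (norm ?r)\<^sup>2) + t * (c * (norm ?r')\<^sup>2)
        - c * (t * (1 - t)) * (norm (A (b - b') + B (\<gamma> - \<gamma>')))\<^sup>2"
    unfolding power2_norm_convex_combination difference by (simp add: algebra_simps)
  moreover have "P ((1 - t) *\<^sub>R b + t *\<^sub>R b') \<le> (1 - t) * P b + t * P b'"
    using convex_onD[OF convex_P] assms by simp
  moreover have "Q ((1 - t) *\<^sub>R \<gamma> + t *\<^sub>R \<gamma>') \<le> (1 - t) * Q \<gamma> + t * Q \<gamma>'"
    using convex_onD[OF convex_Q] assms by simp
  ultimately show ?thesis
    unfolding obj_def residual by (simp add: algebra_simps)
qed

lemma obj_mixed_difference:
  "obj (b + h) (\<gamma> + k) + obj b \<gamma> = obj (b + h) \<gamma> + obj b (\<gamma> + k) + 2 * c * inner (A h) (B k)"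
proof -
  let ?r = "y - A b - B \<gamma>"
  have residuals: "y - A (b + h) - B (\<gamma> + k) = ?r - A h - B k" "y - A (b + h) - B \<gamma> = ?r - A h"
    "y - A b - B (\<gamma> + k) = ?r - B k"
    using linear_A linear_B by (simp_all add: linear_add algebra_simps)
  have "c * ((norm (?r - A h - B k))\<^sup>2 + (norm ?r)\<^sup>2)
      = c * ((norm (?r - A h))\<^sup>2 + (norm (?r - B k))\<^sup>2 + 2 * inner (A h) (B k))"
    by (simp only: power2_norm_mixed_difference)
  then show ?thesis
    unfolding obj_def residuals by (simp add: algebra_simps)
qed

text \<open>The smooth part couples the blocks only through the bilinear term of
  \<open>obj_mixed_difference\<close>, which is of second order along a segment, so convexity
  leaves no room for a descent direction.\<close>

lemma coordinatewise_minimum_is_minimum: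
  assumes min_b: "\<forall>b'. obj b \<gamma> \<le> obj b' \<gamma>" and min_\<gamma>: "\<forall>\<gamma>'. obj b \<gamma> \<le> obj b \<gamma>'"
  shows "obj b \<gamma> \<le> obj b' \<gamma>'"
proof (rule le_of_le_plus_multiples)
  fix t :: real assume t: "0 < t" "t \<le> 1"
  define h k where "h = t *\<^sub>R (b' - b)" and "k = t *\<^sub>R (\<gamma>' - \<gamma>)"
  define I where "I = inner (A (b' - b)) (B (\<gamma>' - \<gamma>))"
  have "inner (A h) (B k) = t\<^sup>2 * I"
    using linear_A linear_B by (simp add: h_def k_def I_def linear_scale power2_eq_square)
  then have "obj b \<gamma> + obj b \<gamma> + 2 * c * (t\<^sup>2 * I) \<le> obj (b + h) (\<gamma> + k) + obj b \<gamma>"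
    using min_b min_\<gamma> obj_mixed_difference[of b h \<gamma> k] by (metis add_mono add_le_cancel_right)
  moreover have "b + h = (1 - t) *\<^sub>R b + t *\<^sub>R b'" "\<gamma> + k = (1 - t) *\<^sub>R \<gamma> + t *\<^sub>R \<gamma>'"
    by (simp_all add: h_def k_def algebra_simps)
  moreover have "obj ((1 - t) *\<^sub>R b + t *\<^sub>R b') ((1 - t) *\<^sub>R \<gamma> + t *\<^sub>R \<gamma>')
      \<le> (1 - t) * obj b \<gamma> + t * obj b' \<gamma>'"
    using obj_convex_combination[of t b b' \<gamma> \<gamma>'] t c_nonneg
    by (smt (verit) mult_nonneg_nonneg zero_le_power2)
  ultimately have "t * obj b \<gamma> \<le> t * (obj b' \<gamma>' + t * (- 2 * c * I))"
    by (simp add: algebra_simps power2_eq_square)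
  then show "obj b \<gamma> \<le> obj b' \<gamma>' + t * (- 2 * c * I)"
    using t by simp
qed

lemma minimizer_unique:
  assumes "0 < c" and independent: "\<And>b \<gamma>. A b + B \<gamma> = 0 \<Longrightarrow> b = 0 \<and> \<gamma> = 0"
    and min1: "\<forall>b \<gamma>. obj b1 \<gamma>1 \<le> obj b \<gamma>" and min2: "\<forall>b \<gamma>. obj b2 \<gamma>2 \<le> obj b \<gamma>"
  shows "b1 = b2 \<and> \<gamma>1 = \<gamma>2"
proof -
  let ?D = "(norm (A (b1 - b2) + B (\<gamma>1 - \<gamma>2)))\<^sup>2"
  have "obj b1 \<gamma>1 = obj b2 \<gamma>2"
    using min1 min2 by (meson order_antisym)
  moreover have
    "obj b1 \<gamma>1 \<le> obj ((1 - 1/2) *\<^sub>R b1 + (1/2) *\<^sub>R b2) ((1 - 1/2) *\<^sub>R \<gamma>1 + (1/2) *\<^sub>R \<gamma>2)"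
    using min1 by blast
  ultimately have "c * (1/4) * ?D \<le> 0"
    using obj_convex_combination[of "1/2" b1 b2 \<gamma>1 \<gamma>2] by simp
  then have "A (b1 - b2) + B (\<gamma>1 - \<gamma>2) = 0"
    using \<open>0 < c\<close> by (simp add: mult_le_0_iff)
  then show ?thesis
    using independent by fastforce
qed

lemma first_block_of_minimizer_iff:
  assumes "0 < c" "\<And>b \<gamma>. A b + B \<gamma> = 0 \<Longrightarrow> b = 0 \<and> \<gamma> = 0"
    and min: "\<forall>b \<gamma>. obj b_min \<gamma>_min \<le> obj b \<gamma>" and min_\<gamma>: "\<forall>\<gamma>. obj b \<gamma>0 \<le> obj b \<gamma>"
  shows "b_min = b \<longleftrightarrow> (\<forall>b'. obj b \<gamma>0 \<le> obj b' \<gamma>0)"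
proof
  assume "b_min = b"
  then show "\<forall>b'. obj b \<gamma>0 \<le> obj b' \<gamma>0"
    using min min_\<gamma> by (metis order_trans)
next
  assume "\<forall>b'. obj b \<gamma>0 \<le> obj b' \<gamma>0"
  then have "\<forall>b' \<gamma>'. obj b \<gamma>0 \<le> obj b' \<gamma>'"
    using min_\<gamma> coordinatewise_minimum_is_minimum by blast
  then show "b_min = b"
    using minimizer_unique[OF assms(1,2) min] by blast
qed

end

lemma oproj_in_span: "oproj S y \<in> span S"
  unfolding oproj_def by (rule closest_point_in_set) (use span_zero in auto)

lemma oproj_orthogonal:
  assumes "s \<in> span S"
  shows "inner (y - oproj S y) s = 0"
proof -
  let ?p = "oproj S y"
  have closest: "inner (y - ?p) (x - ?p) \<le> 0" if "x \<in> span S" for x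
    unfolding oproj_def using that by (intro closest_point_dot) (auto simp: subspace_imp_convex)
  have "?p + s \<in> span S" "?p - s \<in> span S"
    using oproj_in_span assms by (auto intro: span_add span_diff)
  from this[THEN closest] show ?thesis
    by (simp add: inner_minus_right)
qed

lemma column_notin_span_columns:
  fixes X :: "real^'c::finite^'n::finite"
  assumes inj: "inj ((*v) X)" and "c \<notin> C"
  shows "column c X \<notin> span {column j X | j. j \<in> C}"
proof
  assume "column c X \<in> span {column j X | j. j \<in> C}"
  also have "{column j X | j. j \<in> C} = (*v) X ` (\<lambda>j. axis j 1) ` C"
    by (auto simp: image_image matrix_vector_mult_basis)
  also have "span \<dots> = (*v) X ` span ((\<lambda>j. axis j 1) ` C)"
    by (rule span_linear_image) simp
  finally obtain a where a: "a \<in> span ((\<lambda>j. axis j 1) ` C)" "X *v axis c 1 = X *v a"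
    by (auto simp: matrix_vector_mult_basis)
  have "span ((\<lambda>j. axis j 1) ` C) \<subseteq> {x. axis c 1 \<bullet> x = 0}"
    using \<open>c \<notin> C\<close> by (intro span_minimal) (auto simp: subspace_hyperplane inner_axis_axis)
  with a inj show False
    by (auto simp: inj_eq inner_axis_axis)
qed

lemma finite_linorder_downward_induct [case_names step]:
  fixes i :: "'a::{finite,linorder}"
  assumes "\<And>i. (\<And>j. i < j \<Longrightarrow> P j) \<Longrightarrow> P i"
  shows "P i"
proof (induction i rule: measure_induct_rule[where f = "\<lambda>i. card {j. i < j}"])
  case (less i)
  have "card {l. j < l} < card {l. i < l}" if "i < j" for j
    using that by (intro psubset_card_mono) auto
  then show ?case
    using assms less by blast
qed

lemma eq_matrix_inv_mult_iff:
  fixes M :: "real^'k::finite^'k"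
  assumes "invertible M"
  shows "x = matrix_inv M *v a \<longleftrightarrow> M *v x = a"
proof -
  have "M ** matrix_inv M = mat 1 \<and> matrix_inv M ** M = mat 1"
    using assms unfolding invertible_def matrix_inv_def by (rule someI_ex)
  then show ?thesis
    by (metis matrix_vector_mul_assoc matrix_vector_mul_lid)
qed

definition later_columns ::
    "real^('k::{finite,wellorder} + 'm::finite)^'n::finite \<Rightarrow> 'k \<Rightarrow> (real^'n) set" where
  "later_columns X i = {column c X | c. c \<in> range Inr \<union> Inl ` {j. i < j}}"

definition gs_residual ::
    "real^('k::{finite,wellorder} + 'm::finite)^'n::finite \<Rightarrow> 'k \<Rightarrow> real^'n" where
  "gs_residual X i = column (Inl i) X - Pminus X i (column (Inl i) X)"

lemma Pminus_eq_oproj: "Pminus X i = oproj (later_columns X i)"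
proof -
  have "{column (Inr j) X | j. True} \<union> {column (Inl j) X | j. i < j} = later_columns X i"
    unfolding later_columns_def by blast
  then show ?thesis
    by (simp add: Pminus_def)
qed

lemma Vcol_eq_sgn: "Vcol X i = sgn (gs_residual X i)"
  by (simp add: Vcol_def gs_residual_def sgn_div_norm Let_def divide_inverse)

lemma column_eq_gs_residual_plus_oproj:
  "column (Inl i) X = gs_residual X i + oproj (later_columns X i) (column (Inl i) X)"
  by (simp add: gs_residual_def Pminus_eq_oproj)

lemma column_in_later_columns:
  "i < j \<Longrightarrow> column (Inl j) X \<in> later_columns X i" "column (Inr l) X \<in> later_columns X i"
  unfolding later_columns_def by auto

lemma later_columns_antimono: "i < j \<Longrightarrow> later_columns X j \<subseteq> later_columns X i"
  unfolding later_columns_def by auto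

lemma gs_residual_nonzero:
  assumes "inj ((*v) X)"
  shows "gs_residual X i \<noteq> 0"
proof
  assume "gs_residual X i = 0"
  then have "column (Inl i) X = oproj (later_columns X i) (column (Inl i) X)"
    using column_eq_gs_residual_plus_oproj[of i X] by simp
  then have "column (Inl i) X \<in> span (later_columns X i)"
    by (metis oproj_in_span)
  then show False
    using column_notin_span_columns[OF assms, of "Inl i" "range Inr \<union> Inl ` {j. i < j}"]
    by (auto simp: later_columns_def)
qed

lemma inner_Vcol_later:
  assumes "s \<in> span (later_columns X i)"
  shows "inner (Vcol X i) s = 0"
  using oproj_orthogonal[OF assms]
  by (simp add: Vcol_eq_sgn gs_residual_def Pminus_eq_oproj sgn_div_norm)

lemma Vcol_in_span_later:
  assumes "i < j"
  shows "Vcol X j \<in> span (later_columns X i)"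
proof -
  have "column (Inl j) X \<in> span (later_columns X i)"
    using column_in_later_columns(1)[OF assms] by (rule span_base)
  moreover have "oproj (later_columns X j) (column (Inl j) X) \<in> span (later_columns X i)"
    using oproj_in_span span_mono[OF later_columns_antimono[OF assms]] by blast
  ultimately show ?thesis
    unfolding Vcol_eq_sgn gs_residual_def Pminus_eq_oproj sgn_div_norm by (intro span_mul span_diff)
qed

lemma inner_Vcol_Vcol:
  assumes "inj ((*v) X)"
  shows "inner (Vcol X i) (Vcol X j) = (if i = j then 1 else 0)"
proof -
  consider "i = j" | "i < j" | "j < i"
    using neq_iff by blast
  then show ?thesis
  proof cases
    case 1
    then show ?thesis
      using gs_residual_nonzero[OF assms] by (simp add: Vcol_eq_sgn dot_square_norm norm_sgn)
  next
    case 2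
    have "inner (Vcol X i) (Vcol X j) = 0"
      by (rule inner_Vcol_later[OF Vcol_in_span_later[OF 2]])
    with 2 show ?thesis by simp
  next
    case 3
    have "inner (Vcol X j) (Vcol X i) = 0"
      by (rule inner_Vcol_later[OF Vcol_in_span_later[OF 3]])
    with 3 show ?thesis by (simp add: inner_commute)
  qed
qed

lemma inner_column_Vcol_self: "inner (column (Inl i) X) (Vcol X i) = norm (gs_residual X i)"
proof -
  have "inner (gs_residual X i) (oproj (later_columns X i) (column (Inl i) X)) = 0"
    using oproj_orthogonal[OF oproj_in_span] by (simp add: gs_residual_def Pminus_eq_oproj)
  then have "inner (column (Inl i) X) (gs_residual X i) = (norm (gs_residual X i))\<^sup>2"
    by (subst column_eq_gs_residual_plus_oproj)
      (simp add: inner_add_left inner_add_right inner_commute dot_square_norm)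
  then show ?thesis
    by (cases "gs_residual X i = 0") (simp_all add: Vcol_eq_sgn sgn_div_norm power2_eq_square)
qed

lemma blk1_V1_nth: "(transpose (blk1 X) ** V1 X) $ i $ j = inner (column (Inl i) X) (Vcol X j)"
  by (simp add: matrix_matrix_mult_def transpose_def blk1_def V1_def inner_vec_def column_def)

lemma invertible_blk1_V1:
  assumes "inj ((*v) X)"
  shows "invertible (transpose (blk1 X) ** V1 X)"
proof -
  have "det (transpose (blk1 X) ** V1 X) = (\<Prod>i\<in>UNIV. norm (gs_residual X i))"
  proof (subst det_upperdiagonal)
    show "(transpose (blk1 X) ** V1 X) $ i $ j = 0" if "j < i" for i j
      using inner_Vcol_later[OF span_base[OF column_in_later_columns(1)[OF that]]]
      by (simp add: blk1_V1_nth inner_commute)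
  qed (simp add: blk1_V1_nth inner_column_Vcol_self)
  also have "\<dots> \<noteq> 0"
    using gs_residual_nonzero[OF assms] by simp
  finally show ?thesis
    by (simp add: invertible_det_nz)
qed

lemma transpose_blk1_mult_nth: "(transpose (blk1 X) *v z) $ i = inner (column (Inl i) X) z"
  by (simp add: matrix_vector_mult_def transpose_def blk1_def inner_vec_def column_def mult.commute)

lemma transpose_V1_mult_nth: "(transpose (V1 X) *v w) $ j = inner (Vcol X j) w"
  by (simp add: matrix_vector_mult_def transpose_def V1_def inner_vec_def mult.commute)

lemma V1_mult: "V1 X *v a = (\<Sum>j\<in>UNIV. a $ j *\<^sub>R Vcol X j)"
  by (simp add: vec_eq_iff matrix_vector_mult_def V1_def sum_component mult.commute)

lemma orthogonal_columns_if_orthogonal_Vcol: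
  assumes Vcol: "\<And>j. inner z (Vcol X j) = 0" and blk2: "\<And>j. inner z (column (Inr j) X) = 0"
  shows "inner z (column (Inl i) X) = 0"
proof (induction i rule: finite_linorder_downward_induct)
  case (step i)
  have later: "orthogonal z s" if "s \<in> later_columns X i" for s
    using that step blk2 by (auto simp: later_columns_def orthogonal_def)
  have "orthogonal z (oproj (later_columns X i) (column (Inl i) X))"
    by (rule orthogonal_to_span[OF oproj_in_span later])
  then have "inner z (oproj (later_columns X i) (column (Inl i) X)) = 0"
    by (simp add: orthogonal_def)
  moreover have "inner z (gs_residual X i) = 0"
    using Vcol[of i] by (cases "gs_residual X i = 0") (simp_all add: Vcol_eq_sgn sgn_div_norm)
  ultimately show ?case
    by (subst column_eq_gs_residual_plus_oproj) (simp add: inner_add_right)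
qed

lemma blk1_V1_mult_transpose_V1:
  assumes inj: "inj ((*v) X)" and w: "\<And>j. inner w (column (Inr j) X) = 0"
  shows "(transpose (blk1 X) ** V1 X) *v (transpose (V1 X) *v w) = transpose (blk1 X) *v w"
proof -
  define z where "z = w - V1 X *v (transpose (V1 X) *v w)"
  have "inner z (Vcol X i) = 0" for i
  proof -
    have "inner z (Vcol X i)
        = inner w (Vcol X i) - (\<Sum>j\<in>UNIV. inner (Vcol X j) w * inner (Vcol X j) (Vcol X i))"
      by (simp add: z_def V1_mult transpose_V1_mult_nth inner_diff_left inner_sum_left
          del: transpose_matrix_vector)
    also have "\<dots> = 0"
      by (simp add: inner_Vcol_Vcol[OF inj] if_distrib inner_commute cong: if_cong)
    finally show ?thesis .
  qed
  moreover have "inner z (column (Inr j) X) = 0" for j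
    by (simp add: z_def V1_mult inner_diff_left inner_sum_left w
        inner_Vcol_later[OF span_base[OF column_in_later_columns(2)]] del: transpose_matrix_vector)
  ultimately have "transpose (blk1 X) *v z = 0"
    by (simp add: vec_eq_iff transpose_blk1_mult_nth inner_commute orthogonal_columns_if_orthogonal_Vcol
        del: transpose_matrix_vector)
  then show ?thesis
    by (simp add: z_def matrix_vector_mul_assoc[symmetric] matrix_vector_mult_diff_distrib
        del: transpose_matrix_vector)
qed

lemma u1_eq_Lam_iff:
  fixes X :: "real^('k::{finite,wellorder} + 'm::finite)^'n::finite"
  assumes inj: "inj ((*v) X)" and sigk: "sigk X y > 0"
  shows "u1 X y = Lam X y lam g b \<epsilon>
    \<longleftrightarrow> transpose (blk1 X) *v (y - blk1 X *v b - blk2 X *v g b) = (real CARD('n) * lam) *\<^sub>R \<epsilon>"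
proof -
  define w where "w = y - Pk X y"
  define r where "r = Pk X y - blk1 X *v b - blk2 X *v g b"
  define M where "M = transpose (blk1 X) ** V1 X"
  define e where "e = (real CARD('n) * lam) *\<^sub>R \<epsilon>"
  have "inner w (column (Inr j) X) = 0" for j
    unfolding w_def Pk_def by (rule oproj_orthogonal) (auto intro: span_base)
  then have V1_transpose: "M *v (transpose (V1 X) *v w) = transpose (blk1 X) *v w"
    unfolding M_def by (rule blk1_V1_mult_transpose_V1[OF inj])
  have "u1 X y = Lam X y lam g b \<epsilon>
      \<longleftrightarrow> transpose (V1 X) *v w = matrix_inv M *v (- (transpose (blk1 X) *v r) + e)"
    unfolding u1_def Lam_def w_def[symmetric] r_def[symmetric] M_def[symmetric] e_def[symmetric]
    using sigk by simp
  also have "\<dots> \<longleftrightarrow> transpose (blk1 X) *v w = - (transpose (blk1 X) *v r) + e"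
    unfolding M_def eq_matrix_inv_mult_iff[OF invertible_blk1_V1[OF inj]] V1_transpose[unfolded M_def] ..
  also have "\<dots> \<longleftrightarrow> transpose (blk1 X) *v (w + r) = e"
    by (auto simp: matrix_vector_right_distrib simp del: transpose_matrix_vector)
  also have "w + r = y - blk1 X *v b - blk2 X *v g b"
    by (simp add: w_def r_def)
  finally show ?thesis
    by (simp only: e_def)
qed

lemma finv_eq_image: "finv X y lam g b = Lam X y lam g b ` norm_subdifferential b"
  by (auto simp: finv_def norm_subdifferential_nonzero sgn_div_norm divide_inverse)

definition vpair :: "real^'k::finite \<Rightarrow> real^'m::finite \<Rightarrow> real^('k + 'm)" where
  "vpair b \<gamma> = (\<chi> i. case i of Inl j \<Rightarrow> b $ j | Inr j \<Rightarrow> \<gamma> $ j)"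

lemma vfst_vpair [simp]: "vfst (vpair b \<gamma>) = b"
  by (simp add: vfst_def vpair_def)

lemma vsnd_vpair [simp]: "vsnd (vpair b \<gamma>) = \<gamma>"
  by (simp add: vsnd_def vpair_def)

lemma vpair_eq_0_iff: "vpair b \<gamma> = 0 \<longleftrightarrow> b = 0 \<and> \<gamma> = 0"
  by (auto simp: vpair_def vec_eq_iff split: sum.split)

lemma matrix_vector_mult_blocks: "X *v \<beta> = blk1 X *v vfst \<beta> + blk2 X *v vsnd \<beta>"
  by (simp add: vec_eq_iff matrix_vector_mult_def blk1_def blk2_def vfst_def vsnd_def
      sum.Plus[of UNIV UNIV, simplified])

lemma vfst_lasso_minimizer_iff:
  fixes X :: "real^('k::finite + 'm::finite)^'n::finite"
  assumes inj: "inj ((*v) X)" and lam: "lam > 0"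
    and min: "\<forall>\<beta>. lasso_obj X y lam \<beta>hat \<le> lasso_obj X y lam \<beta>"
    and min_sub: "\<forall>\<gamma>. sub_obj X y lam b \<gamma>0 \<le> sub_obj X y lam b \<gamma>"
  shows "vfst \<beta>hat = b \<longleftrightarrow> (\<forall>b'. group_lasso_obj (real CARD('n)) (blk1 X) (y - blk2 X *v \<gamma>0) lam b
    \<le> group_lasso_obj (real CARD('n)) (blk1 X) (y - blk2 X *v \<gamma>0) lam b')"
proof -
  interpret L: two_block_least_squares "(*v) (blk1 X)" "(*v) (blk2 X)" y "1 / (2 * real CARD('n))"
    "\<lambda>b. lam * norm b" "\<lambda>\<gamma>. lam * l1norm \<gamma>"
    using lam by unfold_locales
      (auto simp: matrix_vector_right_distrib matrix_vector_mult_scaleR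
        intro!: convex_on_cmul convex_on_norm convex_on_l1norm)
  have lasso: "lasso_obj X y lam \<beta> = L.obj (vfst \<beta>) (vsnd \<beta>)" for \<beta>
    unfolding lasso_obj_def L.obj_def
    by (simp add: matrix_vector_mult_blocks diff_diff_add algebra_simps)
  have independent: "blk1 X *v b' + blk2 X *v \<gamma> = 0 \<Longrightarrow> b' = 0 \<and> \<gamma> = 0" for b' \<gamma>
    using inj matrix_vector_mult_blocks[of X "vpair b' \<gamma>"]
    by (metis vfst_vpair vsnd_vpair vpair_eq_0_iff inj_eq matrix_vector_mult_0_right)
  have "vfst \<beta>hat = b \<longleftrightarrow> (\<forall>b'. L.obj b \<gamma>0 \<le> L.obj b' \<gamma>0)"
  proof (rule L.first_block_of_minimizer_iff)
    show "\<forall>b' \<gamma>. L.obj (vfst \<beta>hat) (vsnd \<beta>hat) \<le> L.obj b' \<gamma>"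
      using min lasso by (metis vfst_vpair vsnd_vpair)
    show "\<forall>\<gamma>. L.obj b \<gamma>0 \<le> L.obj b \<gamma>"
      using min_sub unfolding sub_obj_def L.obj_def by simp
  qed (use independent in auto)
  then show ?thesis
    unfolding L.obj_def group_lasso_obj_def by (simp add: diff_diff_eq add.commute)
qed

theorem theoremC8:
  fixes X :: "real^('k::{finite,wellorder} + 'm::finite)^'n::finite"
    and y :: "real^'n" and lam :: real
    and \<beta>hat :: "real^('k::{finite,wellorder} + 'm)"
    and g :: "real^'k::{finite,wellorder} \<Rightarrow> real^'m"
  assumes "CARD('n) \<ge> CARD('k + 'm)"
    and "rank X = CARD('k + 'm)"
    and "lam > 0"
    and "sigk X y > 0"
    and "\<forall>\<beta>. lasso_obj X y lam \<beta>hat \<le> lasso_obj X y lam \<beta>"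
    and "\<forall>b \<gamma>. sub_obj X y lam b (g b) \<le> sub_obj X y lam b \<gamma>"
  shows "\<forall>b. vfst \<beta>hat = b \<longleftrightarrow> u1 X y \<in> finv X y lam g b"
proof
  fix b
  have inj: "inj ((*v) X)"
    using assms(2) full_rank_injective by blast
  have "vfst \<beta>hat = b \<longleftrightarrow> (\<forall>b'. group_lasso_obj (real CARD('n)) (blk1 X) (y - blk2 X *v g b) lam b
      \<le> group_lasso_obj (real CARD('n)) (blk1 X) (y - blk2 X *v g b) lam b')"
    using vfst_lasso_minimizer_iff[OF inj assms(3,5)] assms(6) by blast
  also have "\<dots> \<longleftrightarrow> (\<exists>\<epsilon> \<in> norm_subdifferential b.
      transpose (blk1 X) *v (y - blk1 X *v b - blk2 X *v g b) = (real CARD('n) * lam) *\<^sub>R \<epsilon>)"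
    using group_lasso_minimizer_iff[OF _ assms(3), of "real CARD('n)" "blk1 X" "y - blk2 X *v g b" b]
    unfolding diff_diff_eq add.commute[of "blk2 X *v g b"] by simp
  also have "\<dots> \<longleftrightarrow> (\<exists>\<epsilon> \<in> norm_subdifferential b. u1 X y = Lam X y lam g b \<epsilon>)"
    by (simp add: u1_eq_Lam_iff[OF inj assms(4)])
  also have "\<dots> \<longleftrightarrow> u1 X y \<in> finv X y lam g b"
    by (auto simp: finv_eq_image)
  finally show "vfst \<beta>hat = b \<longleftrightarrow> u1 X y \<in> finv X y lam g b" .
qed

end
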